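(* For every integer $n \ge 3$, the graph $K_n \otimes K_n$ is not a circulant graph.
   Context: Graphs have no multiple edges but may have loops. The tensor product $G \otimes H$ of graphs $G$ and $H$ has vertex set $V(G)\times V(H)$, with $(g,h)$ adjacent to $(g',h')$ if and only if $g$ is adjacent to $g'$ in $G$ and $h$ is adjacent to $h'$ in $H$. For an integer $n\ge 1$ and a set $S$ of integers, the circulant graph $C_nS$ has vertex set $\{0,1,\dots,n-1\}$, with $i$ adjacent to $j$ if and only if $i-j \equiv \pm s \pmod n$ for some $s\in S$. A graph is circulant if it is isomorphic to some $C_nS$; equivalently, if its automorphism group contains a cyclic subgroup acting transitively on the vertices. $K_n$ denotes the complete graph on $n$ vertices (no loops). *)

theory Defs
  imports Main "HOL-Number_Theory.Cong"
begin

text \<open>A graph is represented by a vertex set V and a symmetric adjacency relation E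
(loops allowed, no multiple edges).\<close>

definition circulant_adj :: "nat \<Rightarrow> int set \<Rightarrow> nat \<Rightarrow> nat \<Rightarrow> bool" where
  "circulant_adj n S i j \<longleftrightarrow>
     (\<exists>s\<in>S. [int i - int j = s] (mod int n) \<or> [int i - int j = - s] (mod int n))"

definition graph_iso :: "'a set \<Rightarrow> ('a \<Rightarrow> 'a \<Rightarrow> bool) \<Rightarrow> 'b set \<Rightarrow> ('b \<Rightarrow> 'b \<Rightarrow> bool) \<Rightarrow> bool" where
  "graph_iso V E W F \<longleftrightarrow>
     (\<exists>f. bij_betw f V W \<and> (\<forall>u\<in>V. \<forall>v\<in>V. E u v \<longleftrightarrow> F (f u) (f v)))"

definition is_circulant :: "'a set \<Rightarrow> ('a \<Rightarrow> 'a \<Rightarrow> bool) \<Rightarrow> bool" where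
  "is_circulant V E \<longleftrightarrow> (\<exists>n \<ge> 1. \<exists>S::int set. graph_iso V E {0..<n} (circulant_adj n S))"

definition complete_adj :: "'a \<Rightarrow> 'a \<Rightarrow> bool" where
  "complete_adj u v \<longleftrightarrow> u \<noteq> v"

definition tensor_adj :: "('a \<Rightarrow> 'a \<Rightarrow> bool) \<Rightarrow> ('b \<Rightarrow> 'b \<Rightarrow> bool) \<Rightarrow> 'a \<times> 'b \<Rightarrow> 'a \<times> 'b \<Rightarrow> bool" where
  "tensor_adj E F x y \<longleftrightarrow> E (fst x) (fst y) \<and> F (snd x) (snd y)"

end

theory Submission
  imports Defs
begin

text \<open>
  Non-adjacency in \<open>K\<^sub>n \<otimes> K\<^sub>n\<close> means lying on a common row or column, so every automorphism
  maps lines onto lines; for \<open>n \<ge> 2\<close> it therefore either acts coordinatewise,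
  \<open>(a, b) \<mapsto> (\<alpha> a, \<beta> b)\<close>, or swaps the coordinates, \<open>(a, b) \<mapsto> (\<beta> b, \<alpha> a)\<close>.
  If the graph were circulant, the rotation \<open>i \<mapsto> i + 1\<close> of \<open>\<int>/n\<^sup>2\<close> would give an automorphism
  under which every vertex has period exactly \<open>n\<^sup>2\<close>. But in the coordinatewise case
  \<open>(a, b)\<close> returns after \<open>lcm x y < n\<^sup>2\<close> steps, where \<open>x, y \<le> n\<close> are the cycle lengths of
  \<open>a\<close> under \<open>\<alpha>\<close> and of \<open>b\<close> under \<open>\<beta>\<close>; in the swapping case \<open>(a, \<alpha> a)\<close> returns after at most
  \<open>2n < n\<^sup>2\<close> steps, because the square of the automorphism is \<open>\<beta> \<circ> \<alpha>\<close> on the first coordinate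
  and preserves the graph of \<open>\<alpha>\<close>.
\<close>

lemma funpow_return_le_card:
  assumes "finite A" "bij_betw h A A" "a \<in> A"
  obtains k where "0 < k" "k \<le> card A" "(h ^^ k) a = a"
proof -
  have orbit_in: "(h ^^ k) a \<in> A" for k
    using bij_betw_funpow[OF assms(2)] assms(3) by (meson bij_betwE)
  have "\<not> inj_on (\<lambda>k. (h ^^ k) a) {0..card A}"
  proof
    assume "inj_on (\<lambda>k. (h ^^ k) a) {0..card A}"
    then have "card {0..card A} \<le> card A"
      using card_inj_on_le[of _ _ A] orbit_in assms(1) by blast
    then show False by simp
  qed
  then obtain i j where ij: "i < j" "j \<le> card A" "(h ^^ i) a = (h ^^ j) a"
    unfolding inj_on_def by (metis atLeastAtMost_iff linorder_neqE_nat)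
  then have "(h ^^ i) ((h ^^ (j - i)) a) = (h ^^ i) a"
    by (metis funpow_add le_add_diff_inverse less_imp_le o_apply)
  then have "(h ^^ (j - i)) a = a"
    using bij_betw_funpow[OF assms(2), of i] orbit_in assms(3) by (meson bij_betw_def inj_onD)
  with ij show thesis by (intro that[of "j - i"]) auto
qed

lemma funpow_map_prod:
  fixes f :: "'a \<Rightarrow> 'a" and g :: "'b \<Rightarrow> 'b"
  shows "map_prod f g ^^ k = map_prod (f ^^ k) (g ^^ k)"
  by (induction k) (auto simp: fun_eq_iff)

lemma funpow_comp_shift: "((f \<circ> g) ^^ k) (f x) = f (((g \<circ> f) ^^ k) x)"
  by (induction k) simp_all

lemma funpow_cong_on_invariant:
  assumes "\<And>x. x \<in> V \<Longrightarrow> f x \<in> V" "\<And>x. x \<in> V \<Longrightarrow> f x = g x" "x \<in> V"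
  shows "(f ^^ k) x = (g ^^ k) x"
proof -
  have "(f ^^ k) x = (g ^^ k) x \<and> (f ^^ k) x \<in> V"
    using assms by (induction k) auto
  then show ?thesis ..
qed

lemma map_prod_short_return:
  assumes "finite A" "2 \<le> card A" "bij_betw \<alpha> A A" "bij_betw \<beta> A A" "a \<in> A" "b \<in> A"
  obtains k where "0 < k" "k < card A * card A" "(map_prod \<alpha> \<beta> ^^ k) (a, b) = (a, b)"
proof -
  obtain x where x: "0 < x" "x \<le> card A" "(\<alpha> ^^ x) a = a"
    using funpow_return_le_card[OF assms(1,3,5)] by blast
  obtain y where y: "0 < y" "y \<le> card A" "(\<beta> ^^ y) b = b"
    using funpow_return_le_card[OF assms(1,4,6)] by blast
  have "lcm x y < card A * card A"
  proof (cases "x = y")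
    case True
    then have "lcm x y = x" by simp
    also have "\<dots> \<le> card A" using x(2) .
    also have "\<dots> < card A * card A" using assms(2) by simp
    finally show ?thesis .
  next
    case False
    then have "x < card A \<or> y < card A" using x y by linarith
    then have "x * y < card A * card A"
      using x(1,2) y(1,2) by (auto intro: mult_less_le_imp_less mult_le_less_imp_less)
    moreover have "lcm x y \<le> x * y" by (simp add: lcm_nat_def)
    ultimately show ?thesis by linarith
  qed
  moreover have "(map_prod \<alpha> \<beta> ^^ lcm x y) (a, b) = (a, b)"
    using funpow_mod_eq[OF x(3), of "lcm x y"] funpow_mod_eq[OF y(3), of "lcm x y"]
    by (simp add: funpow_map_prod)
  ultimately show thesis using x y by (intro that[of "lcm x y"]) (simp_all add: lcm_pos_nat)
qed

lemma swap_map_short_return: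
  assumes "finite A" "bij_betw (\<beta> \<circ> \<alpha>) A A" "a \<in> A"
  obtains k where "0 < k" "k \<le> 2 * card A" "((prod.swap \<circ> map_prod \<alpha> \<beta>) ^^ k) (a, \<alpha> a) = (a, \<alpha> a)"
proof -
  obtain x where x: "0 < x" "x \<le> card A" "((\<beta> \<circ> \<alpha>) ^^ x) a = a"
    using funpow_return_le_card[OF assms] by blast
  have "(prod.swap \<circ> map_prod \<alpha> \<beta>) ^^ 2 = map_prod (\<beta> \<circ> \<alpha>) (\<alpha> \<circ> \<beta>)"
    by (auto simp: numeral_2_eq_2)
  then have "((prod.swap \<circ> map_prod \<alpha> \<beta>) ^^ (2 * x)) (a, \<alpha> a) = (a, \<alpha> a)"
    using x(3) by (simp add: funpow_mult[symmetric] funpow_map_prod funpow_comp_shift)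
  with x show thesis by (intro that[of "2 * x"]) simp_all
qed

definition same_line :: "'a \<times> 'b \<Rightarrow> 'a \<times> 'b \<Rightarrow> bool" where
  "same_line u v \<longleftrightarrow> fst u = fst v \<or> snd u = snd v"

lemma tensor_complete_adj_iff: "tensor_adj complete_adj complete_adj u v \<longleftrightarrow> \<not> same_line u v"
  by (simp add: tensor_adj_def complete_adj_def same_line_def)

lemma same_line_clique_on_line:
  assumes "\<forall>r\<in>X. \<forall>s\<in>X. same_line r s" "p \<in> X" "q \<in> X" "p \<noteq> q"
  shows "(\<forall>r\<in>X. fst r = fst p) \<or> (\<forall>r\<in>X. snd r = snd p)"
  using assms unfolding same_line_def by (metis prod.expand)

lemma ex_other_in_card_ge_2:
  assumes "2 \<le> card A" "a \<in> A"
  shows "\<exists>b\<in>A. b \<noteq> a"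
proof -
  have "card (A - {a}) \<noteq> 0" using assms by (simp add: card_Diff_singleton)
  then obtain b where "b \<in> A - {a}" by (metis card.empty equals0I)
  then show ?thesis by blast
qed

lemma line_preserving_map_cases:
  fixes \<sigma> :: "'a \<times> 'b \<Rightarrow> 'c \<times> 'd"
  assumes inj: "inj_on \<sigma> (A \<times> B)"
    and lines: "\<And>u v. u \<in> A \<times> B \<Longrightarrow> v \<in> A \<times> B \<Longrightarrow> same_line (\<sigma> u) (\<sigma> v) \<longleftrightarrow> same_line u v"
    and A: "2 \<le> card A" and B: "2 \<le> card B"
  obtains (product) \<alpha> \<beta> where "\<And>a b. a \<in> A \<Longrightarrow> b \<in> B \<Longrightarrow> \<sigma> (a, b) = (\<alpha> a, \<beta> b)"
    | (swap) \<beta> \<alpha> where "\<And>a b. a \<in> A \<Longrightarrow> b \<in> B \<Longrightarrow> \<sigma> (a, b) = (\<beta> b, \<alpha> a)"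
proof -
  obtain a\<^sub>0 b\<^sub>0 where a\<^sub>0: "a\<^sub>0 \<in> A" and b\<^sub>0: "b\<^sub>0 \<in> B"
    using A B by (metis all_not_in_conv card.empty not_numeral_le_zero)
  define row_fst where "row_fst a \<longleftrightarrow> (\<forall>b\<in>B. fst (\<sigma> (a, b)) = fst (\<sigma> (a, b\<^sub>0)))" for a
  define row_snd where "row_snd a \<longleftrightarrow> (\<forall>b\<in>B. snd (\<sigma> (a, b)) = snd (\<sigma> (a, b\<^sub>0)))" for a
  define col_fst where "col_fst b \<longleftrightarrow> (\<forall>a\<in>A. fst (\<sigma> (a, b)) = fst (\<sigma> (a\<^sub>0, b)))" for b
  define col_snd where "col_snd b \<longleftrightarrow> (\<forall>a\<in>A. snd (\<sigma> (a, b)) = snd (\<sigma> (a\<^sub>0, b)))" for b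
  have row: "row_fst a \<or> row_snd a" if a: "a \<in> A" for a
  proof -
    obtain b where b: "b \<in> B" "b \<noteq> b\<^sub>0" using ex_other_in_card_ge_2[OF B b\<^sub>0] by blast
    have "\<forall>r\<in>\<sigma> ` ({a} \<times> B). \<forall>s\<in>\<sigma> ` ({a} \<times> B). same_line r s"
      using a lines by (auto simp: same_line_def)
    moreover have "\<sigma> (a, b\<^sub>0) \<noteq> \<sigma> (a, b)" using inj a b b\<^sub>0 by (auto dest: inj_onD)
    ultimately show ?thesis
      using same_line_clique_on_line[of "\<sigma> ` ({a} \<times> B)"] b b\<^sub>0
      unfolding row_fst_def row_snd_def by blast
  qed
  have col: "col_fst b \<or> col_snd b" if b: "b \<in> B" for b
  proof -
    obtain a where a: "a \<in> A" "a \<noteq> a\<^sub>0" using ex_other_in_card_ge_2[OF A a\<^sub>0] by blast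
    have "\<forall>r\<in>\<sigma> ` (A \<times> {b}). \<forall>s\<in>\<sigma> ` (A \<times> {b}). same_line r s"
      using b lines by (auto simp: same_line_def)
    moreover have "\<sigma> (a\<^sub>0, b) \<noteq> \<sigma> (a, b)" using inj a b a\<^sub>0 by (auto dest: inj_onD)
    ultimately show ?thesis
      using same_line_clique_on_line[of "\<sigma> ` (A \<times> {b})"] a a\<^sub>0
      unfolding col_fst_def col_snd_def by blast
  qed
  have opposite: "\<not> (row_fst a \<and> col_fst b) \<and> \<not> (row_snd a \<and> col_snd b)"
    if a: "a \<in> A" and b: "b \<in> B" for a b
  proof -
    obtain a' where a': "a' \<in> A" "a' \<noteq> a" using ex_other_in_card_ge_2[OF A a] by blast
    obtain b' where b': "b' \<in> B" "b' \<noteq> b" using ex_other_in_card_ge_2[OF B b] by blast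
    have "\<not> same_line (\<sigma> (a, b')) (\<sigma> (a', b))"
      using lines a b a' b' by (simp add: same_line_def)
    then show ?thesis
      using a b a' b' unfolding row_fst_def row_snd_def col_fst_def col_snd_def same_line_def
      by metis
  qed
  show thesis
  proof (cases "row_fst a\<^sub>0")
    case True
    then have "col_snd b" if "b \<in> B" for b using opposite col a\<^sub>0 that by blast
    then have "row_fst a" if "a \<in> A" for a using opposite row b\<^sub>0 that by blast
    then show thesis
      using \<open>\<And>b. b \<in> B \<Longrightarrow> col_snd b\<close>
      by (intro product[of "\<lambda>a. fst (\<sigma> (a, b\<^sub>0))" "\<lambda>b. snd (\<sigma> (a\<^sub>0, b))"])
        (simp add: row_fst_def col_snd_def prod_eq_iff)
  next
    case False
    then have "col_fst b" if "b \<in> B" for b using opposite row col a\<^sub>0 that by blast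
    then have "row_snd a" if "a \<in> A" for a using opposite row b\<^sub>0 that by blast
    then show thesis
      using \<open>\<And>b. b \<in> B \<Longrightarrow> col_fst b\<close>
      by (intro swap[of "\<lambda>b. fst (\<sigma> (a\<^sub>0, b))" "\<lambda>a. snd (\<sigma> (a, b\<^sub>0))"])
        (simp add: row_snd_def col_fst_def prod_eq_iff)
  qed
qed

lemma line_preserving_perm_short_return:
  assumes fin: "finite A" and card: "3 \<le> card A" and bij: "bij_betw \<sigma> (A \<times> A) (A \<times> A)"
    and lines: "\<And>u v. u \<in> A \<times> A \<Longrightarrow> v \<in> A \<times> A \<Longrightarrow> same_line (\<sigma> u) (\<sigma> v) \<longleftrightarrow> same_line u v"
  obtains u k where "u \<in> A \<times> A" "0 < k" "k < card A * card A" "(\<sigma> ^^ k) u = u"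
proof -
  have inj: "inj_on \<sigma> (A \<times> A)" and into: "\<And>u. u \<in> A \<times> A \<Longrightarrow> \<sigma> u \<in> A \<times> A"
    using bij by (auto simp: bij_betw_def)
  have endo_bij: "bij_betw h A A" if "\<And>a. a \<in> A \<Longrightarrow> h a \<in> A" "inj_on h A" for h
    using that fin by (simp add: bij_betw_def endo_inj_surj image_subsetI)
  have card2: "2 \<le> card A" using card by simp
  then obtain a\<^sub>0 where a\<^sub>0: "a\<^sub>0 \<in> A" by (metis all_not_in_conv card.empty not_numeral_le_zero)
  show thesis
  proof (rule line_preserving_map_cases[OF inj lines card2 card2])
    fix \<alpha> \<beta> assume product: "\<And>a b. a \<in> A \<Longrightarrow> b \<in> A \<Longrightarrow> \<sigma> (a, b) = (\<alpha> a, \<beta> b)"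
    have "bij_betw \<alpha> A A"
    proof (rule endo_bij)
      show "\<alpha> a \<in> A" if "a \<in> A" for a using into[of "(a, a\<^sub>0)"] product that a\<^sub>0 by simp
      show "inj_on \<alpha> A" using inj a\<^sub>0 product by (simp add: inj_on_def)
    qed
    moreover have "bij_betw \<beta> A A"
    proof (rule endo_bij)
      show "\<beta> b \<in> A" if "b \<in> A" for b using into[of "(a\<^sub>0, b)"] product that a\<^sub>0 by simp
      show "inj_on \<beta> A" using inj a\<^sub>0 product by (simp add: inj_on_def)
    qed
    ultimately obtain k where k: "0 < k" "k < card A * card A"
      "(map_prod \<alpha> \<beta> ^^ k) (a\<^sub>0, a\<^sub>0) = (a\<^sub>0, a\<^sub>0)"
      by (rule map_prod_short_return[OF fin card2 _ _ a\<^sub>0 a\<^sub>0])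
    moreover have "(\<sigma> ^^ k) (a\<^sub>0, a\<^sub>0) = (map_prod \<alpha> \<beta> ^^ k) (a\<^sub>0, a\<^sub>0)"
      using into product a\<^sub>0 by (intro funpow_cong_on_invariant[where V = "A \<times> A"]) auto
    ultimately show thesis using a\<^sub>0 by (intro that[of "(a\<^sub>0, a\<^sub>0)" k]) simp_all
  next
    fix \<beta> \<alpha> assume swap: "\<And>a b. a \<in> A \<Longrightarrow> b \<in> A \<Longrightarrow> \<sigma> (a, b) = (\<beta> b, \<alpha> a)"
    have \<alpha>: "\<alpha> a \<in> A" if "a \<in> A" for a using into[of "(a, a\<^sub>0)"] swap that a\<^sub>0 by simp
    have "bij_betw (\<beta> \<circ> \<alpha>) A A"
    proof (rule endo_bij)
      show "(\<beta> \<circ> \<alpha>) a \<in> A" if "a \<in> A" for a using into[of "(a\<^sub>0, \<alpha> a)"] swap that a\<^sub>0 \<alpha> by simp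
      have "inj_on \<alpha> A" "inj_on \<beta> A" using inj a\<^sub>0 swap by (simp_all add: inj_on_def)
      then show "inj_on (\<beta> \<circ> \<alpha>) A" using \<alpha> by (auto simp: inj_on_def)
    qed
    then obtain k where k: "0 < k" "k \<le> 2 * card A"
      "((prod.swap \<circ> map_prod \<alpha> \<beta>) ^^ k) (a\<^sub>0, \<alpha> a\<^sub>0) = (a\<^sub>0, \<alpha> a\<^sub>0)"
      by (rule swap_map_short_return[OF fin _ a\<^sub>0])
    have "2 * card A < card A * card A" using card by simp
    with k(2) have "k < card A * card A" by linarith
    moreover have "(\<sigma> ^^ k) (a\<^sub>0, \<alpha> a\<^sub>0) = ((prod.swap \<circ> map_prod \<alpha> \<beta>) ^^ k) (a\<^sub>0, \<alpha> a\<^sub>0)"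
      using into swap a\<^sub>0 \<alpha> by (intro funpow_cong_on_invariant[where V = "A \<times> A"]) auto
    ultimately show thesis using a\<^sub>0 \<alpha> k(1,3) by (intro that[of "(a\<^sub>0, \<alpha> a\<^sub>0)" k]) simp_all
  qed
qed

lemma circulant_adj_shift:
  "circulant_adj m S ((i + k) mod m) ((j + k) mod m) \<longleftrightarrow> circulant_adj m S i j"
proof -
  have "(int ((i + k) mod m) - int ((j + k) mod m)) mod int m = (int i - int j) mod int m"
    by (simp add: zmod_int mod_diff_eq)
  then show ?thesis by (simp add: circulant_adj_def cong_def)
qed

lemma is_circulant_rotationE:
  assumes "is_circulant V E"
  obtains \<sigma> where "bij_betw \<sigma> V V" "\<And>u v. u \<in> V \<Longrightarrow> v \<in> V \<Longrightarrow> E (\<sigma> u) (\<sigma> v) \<longleftrightarrow> E u v"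
    "\<And>u k. u \<in> V \<Longrightarrow> (\<sigma> ^^ k) u = u \<longleftrightarrow> card V dvd k"
proof -
  obtain m S f where f: "bij_betw f V {0..<m}"
    and iso: "\<And>u v. u \<in> V \<Longrightarrow> v \<in> V \<Longrightarrow> E u v \<longleftrightarrow> circulant_adj m S (f u) (f v)"
    using assms unfolding is_circulant_def graph_iso_def by blast
  define \<sigma> where "\<sigma> u = inv_into V f ((f u + 1) mod m)" for u
  have f_less: "f u < m" if "u \<in> V" for u using f that by (auto dest: bij_betwE)
  have iter: "(\<sigma> ^^ k) u \<in> V \<and> f ((\<sigma> ^^ k) u) = (f u + k) mod m" if u: "u \<in> V" for u k
  proof (induction k)
    case 0
    then show ?case using u f_less by simp
  next
    case (Suc k)
    have "(f ((\<sigma> ^^ k) u) + 1) mod m \<in> {0..<m}" using f_less[OF u] by simp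
    then show ?case
      using Suc f unfolding \<sigma>_def
      by (simp add: bij_betw_inv_into_right inv_into_into[of _ f V] bij_betw_imp_surj_on mod_Suc_eq)
  qed
  have step: "\<sigma> u \<in> V" "f (\<sigma> u) = (f u + 1) mod m" if "u \<in> V" for u
    using iter[OF that, of 1] by simp_all
  have "inj_on \<sigma> V"
  proof (rule inj_onI)
    fix u v assume uv: "u \<in> V" "v \<in> V" "\<sigma> u = \<sigma> v"
    then have "[f u + 1 = f v + 1] (mod m)" using step by (metis cong_def)
    then have "f u = f v" using f_less uv by (metis cong_add_rcancel_nat cong_less_modulus_unique_nat)
    then show "u = v" using f uv by (metis bij_betw_def inj_onD)
  qed
  moreover have "\<sigma> ` V \<subseteq> V" using step by blast
  ultimately have bij: "bij_betw \<sigma> V V"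
    using bij_betw_finite[OF f] by (simp add: bij_betw_def endo_inj_surj)
  moreover have "E (\<sigma> u) (\<sigma> v) \<longleftrightarrow> E u v" if "u \<in> V" "v \<in> V" for u v
    using that step iso circulant_adj_shift by metis
  moreover have "(\<sigma> ^^ k) u = u \<longleftrightarrow> card V dvd k" if u: "u \<in> V" for u k
  proof -
    have "(\<sigma> ^^ k) u = u \<longleftrightarrow> (f u + k) mod m = f u"
      using iter[OF u] u f by (metis bij_betw_def inj_onD)
    also have "\<dots> \<longleftrightarrow> [f u + k = f u] (mod m)"
      using f_less[OF u] by (simp add: cong_def)
    also have "\<dots> \<longleftrightarrow> m dvd k" by (simp add: cong_add_lcancel_0_nat cong_0_iff)
    finally show ?thesis using bij_betw_same_card[OF f] by simp
  qed
  ultimately show thesis by (rule that)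
qed

theorem theorem4:
  fixes n :: nat
  assumes "n \<ge> 3"
  shows "\<not> is_circulant ({0..<n} \<times> {0..<n})
                         (tensor_adj (complete_adj :: nat \<Rightarrow> nat \<Rightarrow> bool) (complete_adj :: nat \<Rightarrow> nat \<Rightarrow> bool))"
proof
  let ?V = "{0..<n} \<times> {0..<n}" and ?E = "tensor_adj complete_adj complete_adj"
  assume "is_circulant ?V ?E"
  then obtain \<sigma> where bij: "bij_betw \<sigma> ?V ?V"
    and adj: "\<And>u v. u \<in> ?V \<Longrightarrow> v \<in> ?V \<Longrightarrow> ?E (\<sigma> u) (\<sigma> v) \<longleftrightarrow> ?E u v"
    and period: "\<And>u k. u \<in> ?V \<Longrightarrow> (\<sigma> ^^ k) u = u \<longleftrightarrow> card ?V dvd k"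
    using is_circulant_rotationE by blast
  have lines: "same_line (\<sigma> u) (\<sigma> v) \<longleftrightarrow> same_line u v" if "u \<in> ?V" "v \<in> ?V" for u v
    using adj[OF that] by (simp add: tensor_complete_adj_iff)
  have "3 \<le> card {0..<n}" using assms by simp
  then obtain u k where "u \<in> ?V" "0 < k" "k < card {0..<n} * card {0..<n}" "(\<sigma> ^^ k) u = u"
    using line_preserving_perm_short_return[OF finite_atLeastLessThan _ bij lines] by blast
  then show False using period by (simp add: card_cartesian_product nat_dvd_not_less)
qed

end
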